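(* Fix $1<p,q<\infty$ with $\frac1p+\frac1q=1$, an integer $r>1$, and put $t=r^{1/q}$, $s=r^{1/p}$. Then for every $x\in\mathcal N_s$ we have $|x|_{p,r}\le 1+\frac{\|x\|_p^p}{t}$.
   Context: For $\alpha>0$ let $C_\alpha=\{\pm\alpha^j: j\in\mathbb Z\}\cup\{0\}$ and $\mathcal N_\alpha=\{x\in c_{00}: x(i)\in C_\alpha \text{ for all } i\}$ ($c_{00}$ = finitely supported real sequences). Let $K^{\mathcal M}_{q,r}$ be the smallest subset of $c_{00}$ containing all $\pm e_n$ and such that whenever $y_1,\dots,y_l\in K^{\mathcal M}_{q,r}$, $l\le r$, have pairwise disjoint supports, then $r^{-1/q}(y_1+\dots+y_l)\in K^{\mathcal M}_{q,r}$. Define $|x|_{p,r}=\sup\{\sum_i x(i)y(i): y\in K^{\mathcal M}_{q,r}\}$. *)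

theory Defs
  imports Complex_Main
begin

definition supp :: "(nat \<Rightarrow> real) \<Rightarrow> nat set" where
  "supp x = {i. x i \<noteq> 0}"

definition c00 :: "(nat \<Rightarrow> real) set" where
  "c00 = {x. finite (supp x)}"

definition unit_vec :: "nat \<Rightarrow> nat \<Rightarrow> real" where
  "unit_vec n = (\<lambda>i. if i = n then 1 else 0)"

definition C_set :: "real \<Rightarrow> real set" where
  "C_set \<alpha> = {\<alpha> powr (real_of_int j) | j. True} \<union> {- (\<alpha> powr (real_of_int j)) | j. True} \<union> {0}"

definition N_set :: "real \<Rightarrow> (nat \<Rightarrow> real) set" where
  "N_set \<alpha> = {x \<in> c00. \<forall>i. x i \<in> C_set \<alpha>}"

inductive_set K_M :: "real \<Rightarrow> nat \<Rightarrow> (nat \<Rightarrow> real) set" for q :: real and r :: nat where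
  unit_pos: "unit_vec n \<in> K_M q r"
| unit_neg: "(\<lambda>i. - unit_vec n i) \<in> K_M q r"
| comb: "\<lbrakk> 1 \<le> length ys; length ys \<le> r; \<forall>y \<in> set ys. y \<in> K_M q r;
           \<forall>a < length ys. \<forall>b < length ys. a \<noteq> b \<longrightarrow> supp (ys ! a) \<inter> supp (ys ! b) = {} \<rbrakk>
         \<Longrightarrow> (\<lambda>i. real r powr (- 1 / q) * (\<Sum>y\<leftarrow>ys. y i)) \<in> K_M q r"

definition pair :: "(nat \<Rightarrow> real) \<Rightarrow> (nat \<Rightarrow> real) \<Rightarrow> real" where
  "pair x y = (\<Sum>i\<in>supp x. x i * y i)"

definition norm_pr :: "real \<Rightarrow> real \<Rightarrow> nat \<Rightarrow> (nat \<Rightarrow> real) \<Rightarrow> real" where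
  "norm_pr p q r x = (SUP y \<in> K_M q r. pair x y)"

definition lp_pow :: "real \<Rightarrow> (nat \<Rightarrow> real) \<Rightarrow> real" where
  "lp_pow p x = (\<Sum>i\<in>supp x. \<bar>x i\<bar> powr p)"

end

theory Submission
  imports Defs
begin

(* Every y in K^M_{q,r} has entries in C_t and
   satisfies sum |y i|^q <= 1, because an admissible combination of at most r disjointly
   supported vectors multiplies each entry by t^-1 and the sum of q-th powers by 1/r.
   For u = +-s^j and v = +-t^k one has |u v| <= |v|^q + |u|^p / t: factoring out r^k and
   writing m = j - k, this reduces to r^(m/p) <= 1 + r^(m - 1/q), which is trivial for
   m <= 0 and follows from m/p = m - m/q <= m - 1/q for m >= 1. Summing over the support
   of x bounds the pairing of x and y by 1 + ||x||_p^p / t. *)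

lemma sum_at_most_one_nonzero_apply:
  fixes g :: "'a \<Rightarrow> 'b::comm_monoid_add" and f :: "'b \<Rightarrow> 'c::comm_monoid_add"
  assumes "finite A" and "\<And>a b. a \<in> A \<Longrightarrow> b \<in> A \<Longrightarrow> a \<noteq> b \<Longrightarrow> g a = 0 \<or> g b = 0"
    and "f 0 = 0"
  shows "f (\<Sum>a\<in>A. g a) = (\<Sum>a\<in>A. f (g a))"
proof (cases "\<exists>a\<in>A. g a \<noteq> 0")
  case True
  then obtain a where a: "a \<in> A" "g a \<noteq> 0" by blast
  then have others: "\<forall>b\<in>A - {a}. g b = 0" using assms(2) by blast
  have "(\<Sum>b\<in>A. g b) = g a"
    using sum.mono_neutral_right[OF assms(1), of "{a}"] a others by simp
  moreover have "(\<Sum>b\<in>A. f (g b)) = f (g a)"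
    using sum.mono_neutral_right[OF assms(1), of "{a}" "\<lambda>b. f (g b)"] a others assms(3)
    by simp
  ultimately show ?thesis by simp
qed (simp add: assms(3))

lemma sum_at_most_one_nonzero_mem:
  fixes g :: "'a \<Rightarrow> 'b::comm_monoid_add"
  assumes "finite A" and "\<And>a b. a \<in> A \<Longrightarrow> b \<in> A \<Longrightarrow> a \<noteq> b \<Longrightarrow> g a = 0 \<or> g b = 0"
    and "0 \<in> S" and "\<And>a. a \<in> A \<Longrightarrow> g a \<in> S"
  shows "(\<Sum>a\<in>A. g a) \<in> S"
proof (cases "\<exists>a\<in>A. g a \<noteq> 0")
  case True
  then obtain a where a: "a \<in> A" "g a \<noteq> 0" by blast
  then have "\<forall>b\<in>A - {a}. g b = 0" using assms(2) by blast
  then have "(\<Sum>b\<in>A. g b) = g a"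
    using sum.mono_neutral_right[OF assms(1), of "{a}"] a by simp
  with a assms(4) show ?thesis by simp
qed (simp add: assms(3))

lemma supp_sum_subset: "supp (\<lambda>i. \<Sum>a\<in>A. g a i) \<subseteq> (\<Union>a\<in>A. supp (g a))"
  unfolding supp_def by (auto intro: sum.neutral)

lemma lp_pow_eq_sum_superset:
  assumes "finite S" and "supp x \<subseteq> S"
  shows "lp_pow p x = (\<Sum>i\<in>S. \<bar>x i\<bar> powr p)"
  unfolding lp_pow_def using assms by (intro sum.mono_neutral_left) (auto simp: supp_def)

lemma lp_pow_scale: "lp_pow p (\<lambda>i. c * x i) = \<bar>c\<bar> powr p * lp_pow p x"
proof (cases "c = 0")
  case False
  then have "supp (\<lambda>i. c * x i) = supp x" by (simp add: supp_def)
  then show ?thesis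
    unfolding lp_pow_def by (simp add: abs_mult powr_mult sum_distrib_left)
qed (simp add: lp_pow_def supp_def)

lemma lp_pow_sum_disjoint_supp:
  assumes "finite A" and "\<And>a. a \<in> A \<Longrightarrow> finite (supp (g a))"
    and "\<And>a b. a \<in> A \<Longrightarrow> b \<in> A \<Longrightarrow> a \<noteq> b \<Longrightarrow> supp (g a) \<inter> supp (g b) = {}"
  shows "lp_pow p (\<lambda>i. \<Sum>a\<in>A. g a i) = (\<Sum>a\<in>A. lp_pow p (g a))"
proof -
  define U where "U = (\<Union>a\<in>A. supp (g a))"
  have "finite U" unfolding U_def using assms(1,2) by blast
  have at_most_one: "g a i = 0 \<or> g b i = 0" if "a \<in> A" "b \<in> A" "a \<noteq> b" for a b i
    using assms(3)[OF that] by (auto simp: supp_def)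
  have "lp_pow p (\<lambda>i. \<Sum>a\<in>A. g a i) = (\<Sum>i\<in>U. \<bar>\<Sum>a\<in>A. g a i\<bar> powr p)"
    using \<open>finite U\<close> supp_sum_subset unfolding U_def by (rule lp_pow_eq_sum_superset)
  also have "\<dots> = (\<Sum>i\<in>U. \<Sum>a\<in>A. \<bar>g a i\<bar> powr p)"
    using sum_at_most_one_nonzero_apply[OF assms(1) at_most_one, where f = "\<lambda>v. \<bar>v\<bar> powr p"]
    by simp
  also have "\<dots> = (\<Sum>a\<in>A. \<Sum>i\<in>U. \<bar>g a i\<bar> powr p)"
    by (rule sum.swap)
  also have "\<dots> = (\<Sum>a\<in>A. lp_pow p (g a))"
    using \<open>finite U\<close> by (intro sum.cong refl lp_pow_eq_sum_superset[symmetric]) (auto simp: U_def)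
  finally show ?thesis .
qed

lemma lp_pow_restrict_le:
  assumes "finite S" and "finite (supp y)"
  shows "(\<Sum>i\<in>S. \<bar>y i\<bar> powr q) \<le> lp_pow q y"
proof -
  have "(\<Sum>i\<in>S. \<bar>y i\<bar> powr q) \<le> (\<Sum>i\<in>S \<union> supp y. \<bar>y i\<bar> powr q)"
    using assms by (intro sum_mono2) auto
  also have "\<dots> = lp_pow q y"
    using assms by (intro lp_pow_eq_sum_superset[symmetric]) auto
  finally show ?thesis .
qed

lemma C_set_cases:
  assumes "v \<in> C_set \<alpha>"
  obtains "v = 0" | j :: int where "\<bar>v\<bar> = \<alpha> powr j"
  using assms unfolding C_set_def by auto

lemma zero_in_C_set: "0 \<in> C_set \<alpha>"
  unfolding C_set_def by simp

lemma one_in_C_set: "\<alpha> \<noteq> 0 \<Longrightarrow> 1 \<in> C_set \<alpha>" "\<alpha> \<noteq> 0 \<Longrightarrow> -1 \<in> C_set \<alpha>"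
  unfolding C_set_def by (auto intro!: exI[of _ 0])

lemma C_set_mult_powr_int:
  assumes "v \<in> C_set \<alpha>"
  shows "\<alpha> powr (of_int k) * v \<in> C_set \<alpha>"
proof -
  have "\<alpha> powr (of_int k) * \<alpha> powr (of_int j) = \<alpha> powr (of_int (k + j))" for j
    by (simp add: powr_add)
  then show ?thesis
    using assms unfolding C_set_def by (auto intro: exI[of _ "k + _"])
qed

lemma sum_list_apply_eq_sum_nth: "(\<Sum>y\<leftarrow>ys. y i) = (\<Sum>a<length ys. (ys ! a) i)"
  by (simp add: sum_list_sum_nth atLeast0LessThan)

lemma K_M_subset_N_set:
  assumes "0 < r"
  shows "K_M q r \<subseteq> N_set (real r powr (1 / q))"
proof
  fix y assume "y \<in> K_M q r"
  then show "y \<in> N_set (real r powr (1 / q))"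
  proof induction
    case (unit_pos n)
    show ?case
      using assms zero_in_C_set one_in_C_set by (auto simp: N_set_def c00_def supp_def unit_vec_def)
  next
    case (unit_neg n)
    show ?case
      using assms zero_in_C_set one_in_C_set by (auto simp: N_set_def c00_def supp_def unit_vec_def)
  next
    case (comb ys)
    let ?\<alpha> = "real r powr (1 / q)"
    let ?A = "{..<length ys}"
    have entries: "(ys ! a) i \<in> C_set ?\<alpha>" "finite (supp (ys ! a))" if "a \<in> ?A" for a i
      using comb.IH that by (auto simp: N_set_def c00_def)
    have at_most_one: "(ys ! a) i = 0 \<or> (ys ! b) i = 0" if "a \<in> ?A" "b \<in> ?A" "a \<noteq> b" for a b i
      using comb.hyps(3) that by (auto simp: supp_def)
    have "(\<Sum>a\<in>?A. (ys ! a) i) \<in> C_set ?\<alpha>" for i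
      using at_most_one entries(1) zero_in_C_set by (intro sum_at_most_one_nonzero_mem) auto
    moreover have "real r powr (- 1 / q) = ?\<alpha> powr of_int (- 1)"
      by (simp add: powr_powr powr_minus_divide)
    ultimately have "real r powr (- 1 / q) * (\<Sum>a\<in>?A. (ys ! a) i) \<in> C_set ?\<alpha>" for i
      by (simp only: C_set_mult_powr_int)
    moreover have "finite (supp (\<lambda>i. real r powr (- 1 / q) * (\<Sum>a\<in>?A. (ys ! a) i)))"
      using supp_sum_subset[of "\<lambda>a. ys ! a" ?A] entries(2)
      by (auto simp: supp_def intro: finite_subset)
    ultimately show ?case
      unfolding N_set_def c00_def sum_list_apply_eq_sum_nth by blast
  qed
qed

lemma K_M_lp_pow_le_one:
  assumes "q \<noteq> 0" and "0 < r" and "y \<in> K_M q r"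
  shows "lp_pow q y \<le> 1"
  using assms(3)
proof induction
  case (unit_pos n)
  show ?case by (simp add: lp_pow_def supp_def unit_vec_def)
next
  case (unit_neg n)
  show ?case by (simp add: lp_pow_def supp_def unit_vec_def)
next
  case (comb ys)
  let ?A = "{..<length ys}"
  have members: "ys ! a \<in> K_M q r" "lp_pow q (ys ! a) \<le> 1" if "a \<in> ?A" for a
    using comb.IH that by auto
  have "finite (supp (ys ! a))" if "a \<in> ?A" for a
    using K_M_subset_N_set[OF assms(2)] members(1)[OF that] by (auto simp: N_set_def c00_def)
  then have additive: "lp_pow q (\<lambda>i. \<Sum>a\<in>?A. (ys ! a) i) = (\<Sum>a\<in>?A. lp_pow q (ys ! a))"
    using comb.hyps(3) by (intro lp_pow_sum_disjoint_supp) auto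
  have "\<bar>real r powr (- 1 / q)\<bar> powr q = real r powr (- 1 / q * q)"
    by (simp only: abs_of_nonneg[OF powr_ge_zero] powr_powr)
  also have "\<dots> = 1 / real r"
    using assms(1,2) by (simp add: powr_minus_divide)
  finally have scale: "\<bar>real r powr (- 1 / q)\<bar> powr q = 1 / real r" .
  have "lp_pow q (\<lambda>i. real r powr (- 1 / q) * (\<Sum>y\<leftarrow>ys. y i))
      = 1 / real r * (\<Sum>a\<in>?A. lp_pow q (ys ! a))"
    unfolding sum_list_apply_eq_sum_nth lp_pow_scale scale additive ..
  also have "\<dots> \<le> 1 / real r * real (length ys)"
    using sum_mono[of ?A "\<lambda>a. lp_pow q (ys ! a)" "\<lambda>_. 1"] members(2)
    by (simp add: divide_right_mono)
  also have "\<dots> \<le> 1"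
    using comb.hyps(2) assms(2) by simp
  finally show ?case .
qed

lemma powr_int_young:
  fixes b p q :: real and j k :: int
  assumes "0 < p" and "0 < q" and "1 / p + 1 / q = 1" and "1 \<le> b"
  shows "b powr (j / p) * b powr (k / q) \<le> b powr k + b powr j / b powr (1 / q)"
proof -
  have conjugate: "x / p + x / q = x" for x :: real
  proof -
    have "x / p + x / q = x * (1 / p + 1 / q)" by (simp add: distrib_left)
    then show ?thesis using assms(3) by simp
  qed
  define m where "m = j - k"
  have "j / p + k / q = k + m / p"
    using conjugate[of k] unfolding m_def by (simp add: diff_divide_distrib)
  then have lhs: "b powr (j / p) * b powr (k / q) = b powr k * b powr (m / p)"
    by (simp add: powr_add[symmetric])
  have "j - 1 / q = k + (m - 1 / q)"
    unfolding m_def by simp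
  then have rhs: "b powr j / b powr (1 / q) = b powr k * b powr (m - 1 / q)"
    by (simp only: powr_diff[symmetric] powr_add[symmetric])
  have "b powr (m / p) \<le> 1 + b powr (m - 1 / q)"
  proof (cases "m \<le> 0")
    case True
    then have "b powr (m / p) \<le> b powr 0"
      using assms(1,4) by (intro powr_mono) (simp_all add: divide_nonpos_pos)
    then have "b powr (m / p) \<le> 1" using assms(4) by simp
    moreover have "0 \<le> b powr (m - 1 / q)" by simp
    ultimately show ?thesis by linarith
  next
    case False
    have "m / p = m - m / q"
      using conjugate[of m] by simp
    also have "\<dots> \<le> m - 1 / q"
      using False assms(2) by (simp add: divide_right_mono)
    finally have "b powr (m / p) \<le> b powr (m - 1 / q)"
      using assms(4) by (rule powr_mono)
    then show ?thesis by simp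
  qed
  then have "b powr k * b powr (m / p) \<le> b powr k * (1 + b powr (m - 1 / q))"
    by (simp add: mult_left_mono)
  then show ?thesis
    unfolding lhs rhs by (simp add: algebra_simps)
qed

lemma C_set_young:
  assumes "0 < p" and "0 < q" and "1 / p + 1 / q = 1" and "1 \<le> b"
    and "u \<in> C_set (b powr (1 / p))" and "v \<in> C_set (b powr (1 / q))"
  shows "u * v \<le> \<bar>v\<bar> powr q + \<bar>u\<bar> powr p / b powr (1 / q)"
proof -
  have "u * v \<le> \<bar>u\<bar> * \<bar>v\<bar>"
    by (simp add: abs_mult[symmetric])
  also have "\<dots> \<le> \<bar>v\<bar> powr q + \<bar>u\<bar> powr p / b powr (1 / q)"
  proof (cases "u = 0 \<or> v = 0")
    case False
    obtain j :: int where j: "\<bar>u\<bar> = b powr (j / p)"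
      using assms(5) False by (cases rule: C_set_cases) (auto simp: powr_powr)
    obtain k :: int where k: "\<bar>v\<bar> = b powr (k / q)"
      using assms(6) False by (cases rule: C_set_cases) (auto simp: powr_powr)
    have "\<bar>u\<bar> powr p = b powr j" "\<bar>v\<bar> powr q = b powr k"
      unfolding j k using assms(1,2) by (simp_all add: powr_powr)
    then show ?thesis
      unfolding j k using powr_int_young[OF assms(1-4)] by simp
  qed auto
  finally show ?thesis .
qed

lemma pair_le_lp_pow:
  assumes "0 < p" and "0 < q" and "1 / p + 1 / q = 1" and "1 \<le> b"
    and "x \<in> N_set (b powr (1 / p))" and "y \<in> N_set (b powr (1 / q))"
  shows "pair x y \<le> lp_pow q y + lp_pow p x / b powr (1 / q)"
proof -
  have fin: "finite (supp x)" "finite (supp y)"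
    using assms(5,6) by (simp_all add: N_set_def c00_def)
  have "pair x y \<le> (\<Sum>i\<in>supp x. \<bar>y i\<bar> powr q + \<bar>x i\<bar> powr p / b powr (1 / q))"
    unfolding pair_def using assms
    by (intro sum_mono C_set_young) (auto simp: N_set_def)
  also have "\<dots> = (\<Sum>i\<in>supp x. \<bar>y i\<bar> powr q) + lp_pow p x / b powr (1 / q)"
    unfolding lp_pow_def by (simp add: sum.distrib sum_divide_distrib)
  also have "\<dots> \<le> lp_pow q y + lp_pow p x / b powr (1 / q)"
    using lp_pow_restrict_le[OF fin] by simp
  finally show ?thesis .
qed

theorem mainTheorem4:
  fixes p q :: real and r :: nat and x :: "nat \<Rightarrow> real"
  assumes "1 < p" and "1 < q" and "1 / p + 1 / q = 1" and "r > 1"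
    and "x \<in> N_set (real r powr (1 / p))"
  shows "norm_pr p q r x \<le> 1 + lp_pow p x / real r powr (1 / q)"
  unfolding norm_pr_def
proof (rule cSUP_least)
  show "K_M q r \<noteq> {}"
    using K_M.unit_pos by blast
next
  fix y assume y: "y \<in> K_M q r"
  moreover have "0 < r" using assms(4) by simp
  ultimately have "y \<in> N_set (real r powr (1 / q))"
    using K_M_subset_N_set by blast
  then have "pair x y \<le> lp_pow q y + lp_pow p x / real r powr (1 / q)"
    using assms by (intro pair_le_lp_pow) auto
  also have "lp_pow q y \<le> 1"
    using K_M_lp_pow_le_one y \<open>0 < r\<close> assms(2) by simp
  finally show "pair x y \<le> 1 + lp_pow p x / real r powr (1 / q)"
    by simp
qed

end
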